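(* Let $X$ be a real $\omega$-LUR Banach space in which there is a big point $u\in S_X$. Then $X$ is convex-transitive.
   Context: $X$ is $\omega$-LUR if for every $x\in S_X$ and every $(x_n)\subset B_X$ with $\|x+x_n\|\to 2$ one has $x_n\to x$ weakly. $\mathcal{G}_X$ is the group of surjective linear isometries of $X$; $x\in S_X$ is a big point if $\overline{\mathrm{conv}}(\{T(x):T\in\mathcal{G}_X\})=B_X$; $X$ is convex-transitive if every $x\in S_X$ is a big point. *)

theory Defs
  imports "HOL-Analysis.Analysis"
begin

definition weakly_convergent_to :: "(nat \<Rightarrow> 'a::real_normed_vector) \<Rightarrow> 'a \<Rightarrow> bool" where
  "weakly_convergent_to xs x \<longleftrightarrow>
     (\<forall>f::'a \<Rightarrow> real. bounded_linear f \<longrightarrow> (\<lambda>n. f (xs n)) \<longlonglongrightarrow> f x)"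

definition omega_LUR :: "'a::real_normed_vector itself \<Rightarrow> bool" where
  "omega_LUR _ \<longleftrightarrow>
     (\<forall>(x::'a) xs. x \<in> sphere 0 1 \<longrightarrow> (\<forall>n. xs n \<in> cball 0 1) \<longrightarrow>
        (\<lambda>n. norm (x + xs n)) \<longlonglongrightarrow> 2 \<longrightarrow> weakly_convergent_to xs x)"

definition isometry_group :: "('a::real_normed_vector \<Rightarrow> 'a) set" where
  "isometry_group = {T. linear T \<and> (\<forall>x. norm (T x) = norm x) \<and> surj T}"

definition big_point :: "'a::real_normed_vector \<Rightarrow> bool" where
  "big_point x \<longleftrightarrow> x \<in> sphere 0 1 \<and>
     closure (convex hull {T x | T. T \<in> isometry_group}) = cball 0 1"

definition convex_transitive :: "'a::real_normed_vector itself \<Rightarrow> bool" where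
  "convex_transitive _ \<longleftrightarrow> (\<forall>x::'a. x \<in> sphere 0 1 \<longrightarrow> big_point x)"

end

theory Submission
  imports Defs
begin

text \<open>
  Let \<open>u\<close> be a big point of an omega-LUR space \<open>X\<close> and \<open>x\<close> a unit vector.  Since the
  closed convex hull of the isometric images of \<open>u\<close> is the unit ball, there are
  isometries \<open>T\<^sub>n\<close> with \<open>norm (x + T\<^sub>n u) \<rightarrow> 2\<close>, i.e.\ \<open>norm (u + T\<^sub>n\<^sup>-\<^sup>1 x) \<rightarrow> 2\<close>.  By omega-LUR
  the points \<open>T\<^sub>n\<^sup>-\<^sup>1 x\<close> converge weakly to \<open>u\<close>, so \<open>u\<close> lies in the closed convex hull of
  the orbit of \<open>x\<close>, which is weakly closed and isometry invariant; it therefore contains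
  the orbit hull of \<open>u\<close>, the whole unit ball.

  The weak closedness needs a separation theorem in arbitrary real normed spaces, which
  the library provides only in finite dimension.
\<close>

definition sublinear :: "('a::real_vector \<Rightarrow> real) \<Rightarrow> bool" where
  "sublinear p \<longleftrightarrow> (\<forall>x y. p (x + y) \<le> p x + p y) \<and> (\<forall>c x. c > 0 \<longrightarrow> p (c *\<^sub>R x) = c * p x)"

text \<open>For positive homogeneity one inequality suffices; the other follows by
  rescaling with the inverse factor.\<close>

lemma sublinearI:
  assumes subadd: "\<And>x y. p (x + y) \<le> p x + p y"
    and scale: "\<And>c x. c > 0 \<Longrightarrow> p (c *\<^sub>R x) \<le> c * p x"
  shows "sublinear p"
proof -
  have "c * p x \<le> p (c *\<^sub>R x)" if "c > 0" for c x
  proof -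
    have "p x = p (inverse c *\<^sub>R (c *\<^sub>R x))" using that by simp
    also have "\<dots> \<le> inverse c * p (c *\<^sub>R x)" using scale[of "inverse c" "c *\<^sub>R x"] that by (simp only: positive_imp_inverse_positive)
    finally show ?thesis using that by (simp add: field_simps)
  qed
  with assms show ?thesis unfolding sublinear_def by (meson order_antisym)
qed

lemma sublinear_add: "sublinear p \<Longrightarrow> p (x + y) \<le> p x + p y"
  unfolding sublinear_def by blast

lemma sublinear_zero: assumes "sublinear p" shows "p 0 = 0"
proof -
  have "p ((2::real) *\<^sub>R 0) = 2 * p 0" using assms unfolding sublinear_def by (meson zero_less_numeral)
  thus ?thesis by simp
qed

lemma sublinear_scale: assumes "sublinear p" "c \<ge> 0" shows "p (c *\<^sub>R x) = c * p x"
  using assms sublinear_zero[OF assms(1)] unfolding sublinear_def by (cases "c = 0") auto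

lemma sublinear_lower: assumes "sublinear p" shows "- p (- x) \<le> p x"
  using sublinear_add[OF assms, of x "- x"] sublinear_zero[OF assms] by simp

lemma Inf_add_le:
  fixes A B :: "real set"
  assumes "A \<noteq> {}" "B \<noteq> {}" "\<And>a b. a \<in> A \<Longrightarrow> b \<in> B \<Longrightarrow> v \<le> a + b"
  shows "v \<le> Inf A + Inf B"
proof -
  have "v - Inf B \<le> a" if "a \<in> A" for a
  proof -
    have "v - a \<le> Inf B" using assms(2) by (rule cInf_greatest) (use assms(3) that in force)
    thus ?thesis by simp
  qed
  hence "v - Inf B \<le> Inf A" using assms(1) by (intro cInf_greatest) auto
  thus ?thesis by simp
qed

text \<open>This is the
  chain condition needed for Zorn's lemma.\<close>

lemma sublinear_Inf_chain:
  fixes D :: "('a::real_vector \<Rightarrow> real) set"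
  assumes ne: "D \<noteq> {}"
    and sub: "\<And>q. q \<in> D \<Longrightarrow> sublinear q" and dom: "\<And>q. q \<in> D \<Longrightarrow> q \<le> p"
    and chain: "\<And>q1 q2. q1 \<in> D \<Longrightarrow> q2 \<in> D \<Longrightarrow> q1 \<le> q2 \<or> q2 \<le> q1"
  shows "sublinear (\<lambda>x. INF q\<in>D. q x)" and "r \<in> D \<Longrightarrow> (\<lambda>x. INF q\<in>D. q x) \<le> r"
proof -
  let ?g = "\<lambda>x. INF q\<in>D. q x"
  have "- p (- x) \<le> q x" if "q \<in> D" for q x
    using sublinear_lower[OF sub[OF that], of x] le_funD[OF dom[OF that], of "- x"] by linarith
  hence bdd: "bdd_below ((\<lambda>q. q x) ` D)" for x by (auto simp: bdd_below_def)
  have g_le: "?g x \<le> q x" if "q \<in> D" for q x by (rule cINF_lower[OF bdd that])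
  show "?g \<le> r" if "r \<in> D" using g_le[OF that] by (simp add: le_fun_def)
  show "sublinear ?g"
  proof (rule sublinearI)
    show "?g (x + y) \<le> ?g x + ?g y" for x y
    proof (rule Inf_add_le)
      fix a b assume "a \<in> (\<lambda>q. q x) ` D" "b \<in> (\<lambda>q. q y) ` D"
      then obtain q1 q2 where q: "q1 \<in> D" "q2 \<in> D" "a = q1 x" "b = q2 y" by auto
      have "?g (x + y) \<le> q x + q y" if "q \<in> D" for q
        using g_le[OF that] sublinear_add[OF sub[OF that]] order_trans by blast
      hence "?g (x + y) \<le> min (q1 x + q1 y) (q2 x + q2 y)" using q(1,2) by simp
      also have "\<dots> \<le> a + b" using chain[OF q(1,2)] q(3,4) unfolding le_fun_def
        by (metis add_le_cancel_left add_le_cancel_right min.coboundedI1 min.coboundedI2)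
      finally show "?g (x + y) \<le> a + b" .
    qed (use ne in auto)
    show "?g (c *\<^sub>R x) \<le> c * ?g x" if c: "c > 0" for c x
    proof -
      have "?g (c *\<^sub>R x) / c \<le> q x" if "q \<in> D" for q
        using g_le[OF that, of "c *\<^sub>R x"] sublinear_scale[OF sub[OF that], of c] c
        by (simp add: field_simps)
      hence "?g (c *\<^sub>R x) / c \<le> ?g x" using ne by (intro cINF_greatest)
      thus ?thesis using c by (simp add: field_simps)
    qed
  qed
qed

lemma sublinear_shift:
  fixes q :: "'a::real_vector \<Rightarrow> real" and x :: 'a
  assumes q: "sublinear q"
  defines "h \<equiv> \<lambda>y. Inf {q (y + t *\<^sub>R x) - t * q x | t. t \<ge> 0}"
  shows "sublinear h" and "h \<le> q" and "h (- x) \<le> - q x"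
proof -
  define A where "A y = {q (y + t *\<^sub>R x) - t * q x | t. t \<ge> 0}" for y
  have h_A: "h y = Inf (A y)" for y unfolding h_def A_def ..
  have A_ne: "A y \<noteq> {}" for y unfolding A_def by auto
  have "- q (- y) \<le> q (y + t *\<^sub>R x) - t * q x" if "t \<ge> 0" for y t
    using sublinear_add[OF q, of "y + t *\<^sub>R x" "- y"] sublinear_scale[OF q that] by simp
  hence "bdd_below (A y)" for y unfolding A_def bdd_below_def by blast
  hence h_le: "h y \<le> q (y + t *\<^sub>R x) - t * q x" if "t \<ge> 0" for y t
    unfolding h_A using that by (intro cInf_lower) (auto simp: A_def)
  show "sublinear h"
  proof (rule sublinearI)
    show "h (y1 + y2) \<le> h y1 + h y2" for y1 y2 unfolding h_A[of y1] h_A[of y2]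
    proof (rule Inf_add_le[OF A_ne A_ne])
      fix a b assume "a \<in> A y1" "b \<in> A y2"
      then obtain t1 t2 where t: "t1 \<ge> 0" "a = q (y1 + t1 *\<^sub>R x) - t1 * q x"
        "t2 \<ge> 0" "b = q (y2 + t2 *\<^sub>R x) - t2 * q x" unfolding A_def by auto
      have "h (y1 + y2) \<le> q ((y1 + t1 *\<^sub>R x) + (y2 + t2 *\<^sub>R x)) - (t1 + t2) * q x"
        using h_le[of "t1 + t2" "y1 + y2"] t by (simp add: algebra_simps)
      also have "\<dots> \<le> a + b"
        using sublinear_add[OF q, of "y1 + t1 *\<^sub>R x" "y2 + t2 *\<^sub>R x"] t by (simp add: algebra_simps)
      finally show "h (y1 + y2) \<le> a + b" .
    qed
    show "h (c *\<^sub>R y) \<le> c * h y" if c: "c > 0" for c y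
    proof -
      have "h (c *\<^sub>R y) / c \<le> a" if "a \<in> A y" for a
      proof -
        obtain t where t: "t \<ge> 0" "a = q (y + t *\<^sub>R x) - t * q x" using \<open>a \<in> A y\<close> unfolding A_def by auto
        have "c *\<^sub>R y + (c * t) *\<^sub>R x = c *\<^sub>R (y + t *\<^sub>R x)" by (simp add: algebra_simps)
        hence "h (c *\<^sub>R y) \<le> q (c *\<^sub>R (y + t *\<^sub>R x)) - (c * t) * q x"
          using h_le[of "c * t" "c *\<^sub>R y"] t c by simp
        also have "\<dots> = c * a"
          using sublinear_scale[OF q, of c "y + t *\<^sub>R x"] c t by (simp add: right_diff_distrib)
        finally show ?thesis using c by (simp add: field_simps)
      qed
      hence "h (c *\<^sub>R y) / c \<le> h y" unfolding h_A[of y] by (intro cInf_greatest A_ne)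
      thus ?thesis using c by (simp add: field_simps)
    qed
  qed
  show "h \<le> q" using h_le[of 0] by (simp add: le_fun_def)
  show "h (- x) \<le> - q x" using h_le[of 1 "- x"] sublinear_zero[OF q] by simp
qed

text \<open>A minimal sublinear functional coincides with its shifts, hence is odd, hence linear.\<close>

lemma minimal_sublinear_linear:
  fixes q :: "'a::real_vector \<Rightarrow> real"
  assumes q: "sublinear q" and minimal: "\<And>h. sublinear h \<Longrightarrow> h \<le> q \<Longrightarrow> h = q"
  shows "linear q"
proof -
  have odd: "q (- x) = - q x" for x
  proof -
    define h where "h y = Inf {q (y + t *\<^sub>R x) - t * q x | t. t \<ge> 0}" for y
    have "h = q" using minimal sublinear_shift(1,2)[OF q, of x] unfolding h_def by blast
    moreover have "h (- x) \<le> - q x" unfolding h_def by (rule sublinear_shift(3)[OF q])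
    ultimately have "q (- x) \<le> - q x" by simp
    thus ?thesis using sublinear_lower[OF q, of x] by simp
  qed
  show ?thesis
  proof (rule linearI)
    show "q (a + b) = q a + q b" for a b
      using sublinear_add[OF q, of a b] sublinear_add[OF q, of "- a" "- b"] odd[of a] odd[of b]
        odd[of "a + b"] by (simp add: add.commute)
    show "q (r *\<^sub>R b) = r *\<^sub>R q b" for r b
    proof (cases "r \<ge> 0")
      case True thus ?thesis using sublinear_scale[OF q] by simp
    next
      case False
      hence "q ((- r) *\<^sub>R (- b)) = (- r) * q (- b)" by (intro sublinear_scale[OF q]) auto
      thus ?thesis using odd[of b] by simp
    qed
  qed
qed

text \<open>Zorn's lemma yields a minimal sublinear
  functional below \<open>p\<close>, which is linear.\<close>

theorem sublinear_dominated_linear: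
  fixes p :: "'a::real_vector \<Rightarrow> real"
  assumes p: "sublinear p"
  shows "\<exists>f. linear f \<and> f \<le> p"
proof -
  define S where "S = {q. sublinear q \<and> q \<le> p}"
  have "partial_order_on S (relation_of (\<ge>) S)"
    unfolding partial_order_on_def preorder_on_def refl_on_def trans_on_def antisym_on_def relation_of_def
    by auto
  moreover have "\<exists>g\<in>S. \<forall>q\<in>C. g \<le> q" if C: "C \<in> Chains (relation_of (\<ge>) S)" for C
  proof -
    have CS: "C \<subseteq> S" using Chains_relation_of[OF C] .
    define D where "D = insert p C"
    have D_chain: "q1 \<le> q2 \<or> q2 \<le> q1" if "q1 \<in> D" "q2 \<in> D" for q1 q2
      using that C CS unfolding D_def Chains_def relation_of_def S_def by auto
    have D_S: "q \<in> D \<Longrightarrow> sublinear q \<and> q \<le> p" for q using CS p unfolding D_def S_def by auto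
    define g where "g x = (INF q\<in>D. q x)" for x
    have "sublinear g" and g_le: "q \<in> D \<Longrightarrow> g \<le> q" for q
      unfolding g_def using sublinear_Inf_chain[of D p] D_S D_chain by (auto simp: D_def)
    thus ?thesis unfolding S_def D_def by auto
  qed
  ultimately obtain m where m: "m \<in> S" "\<And>q. q \<in> S \<Longrightarrow> q \<le> m \<Longrightarrow> q = m"
    using predicate_Zorn[where A=S and P="(\<ge>)"] by auto
  have "linear m" using m unfolding S_def by (intro minimal_sublinear_linear) (auto intro: order_trans)
  thus ?thesis using m(1) unfolding S_def by auto
qed

text \<open>The gauge used to separate a point \<open>u\<close> from a convex set \<open>C\<close> whose points keep
  distance at least \<open>e\<close> from \<open>u\<close>: moving \<open>z\<close> along the cone of directions \<open>c - u\<close> is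
  rewarded by \<open>e\<close> per unit.\<close>

definition cone_gauge :: "'a::real_normed_vector set \<Rightarrow> 'a \<Rightarrow> real \<Rightarrow> 'a \<Rightarrow> real" where
  "cone_gauge C u e z = Inf {norm (z + s *\<^sub>R (c - u)) - s * e | s c. s \<ge> 0 \<and> c \<in> C}"

context
  fixes C :: "'a::real_normed_vector set" and u :: 'a and e :: real
  assumes convex: "convex C" and nonempty: "C \<noteq> {}" and far: "\<And>c. c \<in> C \<Longrightarrow> e \<le> norm (c - u)"
begin

text \<open>The gauge is bounded below by \<open>-norm z\<close>, so it is a genuine infimum.\<close>

lemma cone_gauge_le:
  assumes "s \<ge> 0" "c \<in> C"
  shows "cone_gauge C u e z \<le> norm (z + s *\<^sub>R (c - u)) - s * e"
proof -
  have "- norm z \<le> norm (z + s *\<^sub>R (c - u)) - s * e" if "s \<ge> 0" "c \<in> C" for s c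
  proof -
    have "s * e \<le> norm (s *\<^sub>R (c - u))" using far[OF that(2)] that(1) by (simp add: mult_left_mono)
    also have "\<dots> \<le> norm (z + s *\<^sub>R (c - u)) + norm z" using norm_triangle_ineq4[of "z + s *\<^sub>R (c - u)" z] by simp
    finally show ?thesis by simp
  qed
  hence "bdd_below {norm (z + s *\<^sub>R (c - u)) - s * e | s c. s \<ge> 0 \<and> c \<in> C}"
    unfolding bdd_below_def by blast
  thus ?thesis unfolding cone_gauge_def using assms by (intro cInf_lower) blast+
qed

lemma cone_gauge_le_norm: "cone_gauge C u e z \<le> norm z"
  using cone_gauge_le[of 0] nonempty by auto

lemma cone_gauge_sublinear: "sublinear (cone_gauge C u e)"
proof -
  define A where "A z = {norm (z + s *\<^sub>R (c - u)) - s * e | s c. s \<ge> 0 \<and> c \<in> C}" for z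
  have p_A: "cone_gauge C u e z = Inf (A z)" for z unfolding cone_gauge_def A_def ..
  have A_ne: "A z \<noteq> {}" for z using nonempty unfolding A_def by blast
  show ?thesis
  proof (rule sublinearI)
    fix z1 z2
    show "cone_gauge C u e (z1 + z2) \<le> cone_gauge C u e z1 + cone_gauge C u e z2"
      unfolding p_A[of z1] p_A[of z2]
    proof (rule Inf_add_le[OF A_ne A_ne])
      fix a b assume "a \<in> A z1" "b \<in> A z2"
      then obtain s1 c1 s2 c2 where sc: "s1 \<ge> 0" "c1 \<in> C" "a = norm (z1 + s1 *\<^sub>R (c1 - u)) - s1 * e"
        "s2 \<ge> 0" "c2 \<in> C" "b = norm (z2 + s2 *\<^sub>R (c2 - u)) - s2 * e" unfolding A_def by blast
      show "cone_gauge C u e (z1 + z2) \<le> a + b"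
      proof (cases "s1 + s2 = 0")
        case True
        hence "s1 = 0" "s2 = 0" using sc by auto
        thus ?thesis using cone_gauge_le_norm[of "z1 + z2"] norm_triangle_ineq[of z1 z2] sc by simp
      next
        case False
        define s where "s = s1 + s2"
        have s: "s > 0" using False sc s_def by auto
        define c where "c = (s1 / s) *\<^sub>R c1 + (s2 / s) *\<^sub>R c2"
        have "s1 / s + s2 / s = 1" using s unfolding s_def by (simp add: add_divide_distrib[symmetric])
        hence "c \<in> C" unfolding c_def using sc s by (intro convexD[OF convex]) auto
        have "s *\<^sub>R c = s1 *\<^sub>R c1 + s2 *\<^sub>R c2" using s unfolding c_def by (simp add: scaleR_add_right)
        hence "s *\<^sub>R (c - u) = s1 *\<^sub>R (c1 - u) + s2 *\<^sub>R (c2 - u)"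
          unfolding s_def by (simp add: algebra_simps)
        hence eq: "z1 + z2 + s *\<^sub>R (c - u) = (z1 + s1 *\<^sub>R (c1 - u)) + (z2 + s2 *\<^sub>R (c2 - u))"
          by (simp add: algebra_simps)
        have "cone_gauge C u e (z1 + z2) \<le> norm (z1 + z2 + s *\<^sub>R (c - u)) - s * e"
          by (rule cone_gauge_le[OF less_imp_le[OF s] \<open>c \<in> C\<close>])
        also have "\<dots> = norm ((z1 + s1 *\<^sub>R (c1 - u)) + (z2 + s2 *\<^sub>R (c2 - u))) - s * e"
          unfolding eq ..
        also have "\<dots> \<le> a + b"
          using norm_triangle_ineq[of "z1 + s1 *\<^sub>R (c1 - u)" "z2 + s2 *\<^sub>R (c2 - u)"] sc
          unfolding s_def by (simp add: algebra_simps)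
        finally show ?thesis .
      qed
    qed
  next
    fix l :: real and z assume l: "l > 0"
    have "cone_gauge C u e (l *\<^sub>R z) / l \<le> a" if "a \<in> A z" for a
    proof -
      obtain s c where sc: "s \<ge> 0" "c \<in> C" "a = norm (z + s *\<^sub>R (c - u)) - s * e"
        using \<open>a \<in> A z\<close> unfolding A_def by blast
      have "l *\<^sub>R z + (l * s) *\<^sub>R (c - u) = l *\<^sub>R (z + s *\<^sub>R (c - u))" by (simp add: algebra_simps)
      hence "cone_gauge C u e (l *\<^sub>R z) \<le> l * norm (z + s *\<^sub>R (c - u)) - (l * s) * e"
        using cone_gauge_le[OF _ sc(2), of "l * s" "l *\<^sub>R z"] sc l by simp
      also have "\<dots> = l * a" using sc by (simp add: right_diff_distrib)
      finally show ?thesis using l by (simp add: field_simps)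
    qed
    hence "cone_gauge C u e (l *\<^sub>R z) / l \<le> cone_gauge C u e z"
      unfolding p_A[of z] by (intro cInf_greatest A_ne)
    thus "cone_gauge C u e (l *\<^sub>R z) \<le> l * cone_gauge C u e z" using l by (simp add: field_simps)
  qed
qed

end

text \<open>Separation of a point from a closed convex set by a continuous linear functional
  (in an arbitrary real normed space): a linear functional below the cone gauge is
  bounded by the norm and is at least \<open>e\<close> larger on \<open>C\<close> than at \<open>u\<close>.\<close>

theorem separate_point_closed_convex:
  fixes C :: "'a::real_normed_vector set"
  assumes convex: "convex C" and closed: "closed C" and u: "u \<notin> C"
  shows "\<exists>(f::'a \<Rightarrow> real) e. bounded_linear f \<and> e > 0 \<and> (\<forall>c\<in>C. f u + e \<le> f c)"
proof (cases "C = {}")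
  case True
  thus ?thesis by (intro exI[of _ "\<lambda>_. 0"] exI[of _ 1]) simp
next
  case False
  obtain e where e: "e > 0" "ball u e \<subseteq> - C"
    using closed u open_contains_ball[of "- C"] by (auto simp: open_Compl)
  have far: "e \<le> norm (c - u)" if "c \<in> C" for c
    using e that by (force simp: dist_norm norm_minus_commute)
  let ?p = "cone_gauge C u e"
  obtain f where f: "linear f" "f \<le> ?p"
    using sublinear_dominated_linear[OF cone_gauge_sublinear[OF convex False far]] by blast
  have f_norm: "f z \<le> norm z" for z
    using le_funD[OF f(2)] cone_gauge_le_norm[OF convex False far] order_trans by blast
  have "bounded_linear f"
  proof (rule bounded_linear_intro[where K=1])
    show "f (x + y) = f x + f y" "f (r *\<^sub>R x) = r *\<^sub>R f x" for x y r
      using linear_add[OF f(1)] linear_scale[OF f(1)] by auto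
    show "norm (f x) \<le> norm x * 1" for x
      using f_norm[of x] f_norm[of "- x"] linear_neg[OF f(1), of x] by simp
  qed
  moreover have "f u + e \<le> f c" if "c \<in> C" for c
  proof -
    have "f (u - c) \<le> norm (u - c + 1 *\<^sub>R (c - u)) - 1 * e"
      using le_funD[OF f(2), of "u - c"] cone_gauge_le[OF convex False far, of 1 c "u - c"] that by simp
    thus ?thesis using linear_diff[OF f(1)] by simp
  qed
  ultimately show ?thesis using e(1) by blast
qed

lemma closed_convex_weakly_sequentially_closed:
  fixes C :: "'a::real_normed_vector set"
  assumes "convex C" "closed C" "\<And>n. xs n \<in> C" "weakly_convergent_to xs y"
  shows "y \<in> C"
proof (rule ccontr)
  assume "y \<notin> C"
  then obtain f :: "'a \<Rightarrow> real" and e where f: "bounded_linear f" "e > 0" "\<And>c. c \<in> C \<Longrightarrow> f y + e \<le> f c"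
    using separate_point_closed_convex[OF assms(1,2)] by blast
  have "(\<lambda>n. f (xs n)) \<longlonglongrightarrow> f y" using assms(4) f(1) unfolding weakly_convergent_to_def by blast
  hence "f y + e \<le> f y" using f(3)[OF assms(3)] by (intro LIMSEQ_le_const) auto
  thus False using f(2) by simp
qed

lemma isometry_linear: "T \<in> isometry_group \<Longrightarrow> linear T"
  by (simp add: isometry_group_def)

lemma isometry_norm: "T \<in> isometry_group \<Longrightarrow> norm (T x) = norm x"
  by (simp add: isometry_group_def)

lemma isometry_bounded_linear: assumes "T \<in> isometry_group" shows "bounded_linear T"
proof (rule bounded_linear_intro[where K=1])
  show "T (x + y) = T x + T y" "T (r *\<^sub>R x) = r *\<^sub>R T x" for x y r
    using linear_add[OF isometry_linear[OF assms]] linear_scale[OF isometry_linear[OF assms]] by auto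
  show "norm (T x) \<le> norm x * 1" for x using isometry_norm[OF assms] by simp
qed

lemma isometry_comp:
  assumes "T \<in> isometry_group" "S \<in> isometry_group" shows "T \<circ> S \<in> isometry_group"
proof -
  have "linear (T \<circ> S)" by (rule linear_compose[OF isometry_linear[OF assms(2)] isometry_linear[OF assms(1)]])
  moreover have "surj (T \<circ> S)" using assms comp_surj unfolding isometry_group_def by blast
  ultimately show ?thesis using assms unfolding isometry_group_def by simp
qed

lemma isometry_inv:
  assumes T: "T \<in> isometry_group"
  shows "inv T \<in> isometry_group" and "T (inv T y) = y"
proof -
  have lin: "linear T" and surj: "surj T" and norm: "\<And>x. norm (T x) = norm x"
    using T by (auto simp: isometry_group_def)
  have "inj T"
  proof (rule injI)
    fix a b assume "T a = T b"
    hence "norm (T (a - b)) = 0" using linear_diff[OF lin] by simp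
    thus "a = b" using norm by simp
  qed
  show right_inv: "T (inv T y) = y" for y by (rule surj_f_inv_f[OF surj])
  have "linear (inv T)"
  proof (rule linearI)
    show "inv T (a + b) = inv T a + inv T b" for a b
      by (rule injD[OF \<open>inj T\<close>]) (simp add: right_inv linear_add[OF lin])
    show "inv T (r *\<^sub>R a) = r *\<^sub>R inv T a" for r a
      by (rule injD[OF \<open>inj T\<close>]) (simp add: right_inv linear_scale[OF lin])
  qed
  moreover have "norm (inv T x) = norm x" for x using norm[of "inv T x"] right_inv by simp
  moreover have "surj (inv T)" by (rule inj_imp_surj_inv[OF \<open>inj T\<close>])
  ultimately show "inv T \<in> isometry_group" by (simp add: isometry_group_def)
qed

definition isometry_orbit :: "'a::real_normed_vector \<Rightarrow> 'a set" where
  "isometry_orbit x = {T x | T. T \<in> isometry_group}"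

definition orbit_hull :: "'a::real_normed_vector \<Rightarrow> 'a set" where
  "orbit_hull x = closure (convex hull isometry_orbit x)"

lemma big_point_orbit_hull: "big_point u \<longleftrightarrow> u \<in> sphere 0 1 \<and> orbit_hull u = cball 0 1"
  unfolding big_point_def orbit_hull_def isometry_orbit_def ..

lemma orbit_hull_convex: "convex (orbit_hull x)"
  unfolding orbit_hull_def by simp

lemma orbit_hull_closed: "closed (orbit_hull x)"
  unfolding orbit_hull_def by simp

lemma isometry_orbit_subset_orbit_hull: "isometry_orbit x \<subseteq> orbit_hull x"
  unfolding orbit_hull_def by (rule order_trans[OF hull_subset closure_subset])

lemma orbit_hull_subset_cball: "orbit_hull x \<subseteq> cball 0 (norm x)"
proof -
  have "isometry_orbit x \<subseteq> cball 0 (norm x)"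
  proof
    fix z assume "z \<in> isometry_orbit x"
    then obtain T where "T \<in> isometry_group" "z = T x" unfolding isometry_orbit_def by blast
    thus "z \<in> cball 0 (norm x)" by (simp add: isometry_norm)
  qed
  hence "convex hull isometry_orbit x \<subseteq> cball 0 (norm x)" by (intro hull_minimal) auto
  thus ?thesis unfolding orbit_hull_def by (intro closure_minimal) auto
qed

lemma isometry_image_orbit_hull:
  assumes T: "T \<in> isometry_group" shows "T ` orbit_hull x \<subseteq> orbit_hull x"
proof -
  have "T ` isometry_orbit x \<subseteq> isometry_orbit x"
  proof
    fix z assume "z \<in> T ` isometry_orbit x"
    then obtain S where S: "S \<in> isometry_group" "z = (T \<circ> S) x" unfolding isometry_orbit_def by auto
    thus "z \<in> isometry_orbit x" unfolding isometry_orbit_def using isometry_comp[OF T S(1)] by blast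
  qed
  hence "convex hull (T ` isometry_orbit x) \<subseteq> convex hull isometry_orbit x" by (rule hull_mono)
  hence "T ` (convex hull isometry_orbit x) \<subseteq> convex hull isometry_orbit x"
    by (simp only: convex_hull_linear_image[OF isometry_linear[OF T]])
  hence img: "T ` (convex hull isometry_orbit x) \<subseteq> orbit_hull x"
    unfolding orbit_hull_def using closure_subset by (rule order_trans)
  have cont: "continuous_on (closure (convex hull isometry_orbit x)) T"
    using linear_continuous_on[OF isometry_bounded_linear[OF T]] .
  have "T ` closure (convex hull isometry_orbit x) \<subseteq> orbit_hull x"
    by (rule image_closure_subset[OF cont orbit_hull_closed img])
  thus ?thesis unfolding orbit_hull_def[of x] .
qed

lemma orbit_hull_mono:
  assumes "y \<in> orbit_hull x" shows "orbit_hull y \<subseteq> orbit_hull x"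
proof -
  have "isometry_orbit y \<subseteq> orbit_hull x"
  proof
    fix z assume "z \<in> isometry_orbit y"
    then obtain T where T: "T \<in> isometry_group" "z = T y" unfolding isometry_orbit_def by blast
    have "T y \<in> T ` orbit_hull x" using assms by (rule imageI)
    thus "z \<in> orbit_hull x" using isometry_image_orbit_hull[OF T(1)] T(2) by blast
  qed
  hence "convex hull isometry_orbit y \<subseteq> orbit_hull x"
    by (intro hull_minimal orbit_hull_convex)
  thus ?thesis unfolding orbit_hull_def[of y] by (intro closure_minimal orbit_hull_closed)
qed

text \<open>If \<open>u\<close> is a big point, then for a unit vector \<open>x\<close> the isometric images of \<open>u\<close>
  almost attain \<open>norm (x + T u) = 2\<close>: otherwise the orbit hull of \<open>u\<close>, i.e.\ the unit ball,
  would lie in a closed ball around \<open>-x\<close> of radius \<open>< 2\<close>, which misses \<open>x\<close>.\<close>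

lemma big_point_norming:
  assumes big: "big_point u" and x: "norm x = 1" and eps: "\<epsilon> > 0"
  shows "\<exists>T\<in>isometry_group. 2 - \<epsilon> < norm (x + T u)"
proof (rule ccontr)
  assume "\<not> ?thesis"
  hence "norm (x + T u) \<le> 2 - \<epsilon>" if "T \<in> isometry_group" for T using that by (meson not_less)
  hence "isometry_orbit u \<subseteq> cball (- x) (2 - \<epsilon>)"
    unfolding isometry_orbit_def by (auto simp: dist_norm norm_minus_commute add.commute)
  hence "orbit_hull u \<subseteq> cball (- x) (2 - \<epsilon>)"
    unfolding orbit_hull_def by (intro closure_minimal hull_minimal) auto
  moreover have "x \<in> orbit_hull u" using big x unfolding big_point_orbit_hull by simp
  ultimately have "dist (- x) x \<le> 2 - \<epsilon>" by auto
  moreover have "dist (- x) x = 2"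
  proof -
    have "- x - x = - (2 *\<^sub>R x)" by (simp add: scaleR_2)
    thus ?thesis using x by (simp add: dist_norm)
  qed
  ultimately show False using eps by simp
qed

lemma big_point_norming_sequence:
  assumes "big_point u" and "norm x = 1"
  obtains T where "\<And>n. T n \<in> isometry_group" and "(\<lambda>n. norm (x + T n u)) \<longlonglongrightarrow> 2"
proof -
  have "\<exists>T\<in>isometry_group. 2 - inverse (real (Suc n)) < norm (x + T u)" for n
    by (rule big_point_norming[OF assms]) simp
  then obtain T where T: "\<And>n. T n \<in> isometry_group" "\<And>n. 2 - inverse (real (Suc n)) < norm (x + T n u)"
    by metis
  have lower: "\<forall>\<^sub>F n in sequentially. 2 - inverse (real (Suc n)) \<le> norm (x + T n u)"
    using T(2) less_imp_le by (intro always_eventually) blast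
  have "norm (x + T n u) \<le> 2" for n
    using norm_triangle_ineq[of x "T n u"] isometry_norm[OF T(1)] assms by (simp add: big_point_def)
  hence "\<forall>\<^sub>F n in sequentially. norm (x + T n u) \<le> 2" by (intro always_eventually) blast
  moreover have "(\<lambda>n. 2 - inverse (real (Suc n))) \<longlonglongrightarrow> (2::real)"
    using tendsto_diff[OF tendsto_const LIMSEQ_inverse_real_of_nat, of 2] by simp
  ultimately have "(\<lambda>n. norm (x + T n u)) \<longlonglongrightarrow> 2"
    by (intro tendsto_sandwich[OF lower _ _ tendsto_const])
  thus ?thesis by (rule that[OF T(1)])
qed

text \<open>With \<open>norm (x + T\<^sub>n u) \<rightarrow> 2\<close>, the points \<open>x\<^sub>n = T\<^sub>n\<^sup>-\<^sup>1 x\<close> of the orbit of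
  \<open>x\<close> satisfy \<open>norm (u + x\<^sub>n) \<rightarrow> 2\<close>, so \<open>x\<^sub>n \<rightarrow> u\<close> weakly and \<open>u\<close> lies in the (weakly
  closed) orbit hull.\<close>

lemma omega_LUR_big_point_in_orbit_hull:
  assumes lur: "omega_LUR TYPE('a::real_normed_vector)"
    and big: "big_point (u::'a)" and x: "norm (x::'a) = 1"
  shows "u \<in> orbit_hull x"
proof -
  obtain T where T: "\<And>n. T n \<in> isometry_group" "(\<lambda>n. norm (x + T n u)) \<longlonglongrightarrow> 2"
    using big_point_norming_sequence[OF big x] by blast
  define xs where "xs n = inv (T n) x" for n
  have xs_orbit: "xs n \<in> isometry_orbit x" for n
    unfolding xs_def isometry_orbit_def using isometry_inv(1)[OF T(1)] by blast
  have xs_ball: "xs n \<in> cball 0 1" for n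
    unfolding xs_def using isometry_norm[OF isometry_inv(1)[OF T(1)]] x by simp
  have "norm (u + xs n) = norm (x + T n u)" for n
  proof -
    have "T n (u + xs n) = x + T n u"
      unfolding xs_def using linear_add[OF isometry_linear[OF T(1)]] isometry_inv(2)[OF T(1)]
      by (simp add: add.commute)
    thus ?thesis using isometry_norm[OF T(1), of n "u + xs n"] by simp
  qed
  hence lim: "(\<lambda>n. norm (u + xs n)) \<longlonglongrightarrow> 2" using T(2) by simp
  have u: "u \<in> sphere 0 1" using big by (simp add: big_point_def)
  have weak: "weakly_convergent_to xs u"
    using lur[unfolded omega_LUR_def, rule_format, OF u _ lim] xs_ball by blast
  have "xs n \<in> orbit_hull x" for n
    using xs_orbit isometry_orbit_subset_orbit_hull by blast
  thus ?thesis
    by (rule closed_convex_weakly_sequentially_closed[OF orbit_hull_convex orbit_hull_closed _ weak])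
qed

theorem proposition3p4:
  assumes "omega_LUR TYPE('a::banach)"
    and "u \<in> sphere (0::'a) 1" and "big_point u"
  shows "convex_transitive TYPE('a)"
  unfolding convex_transitive_def
proof (intro allI impI)
  fix x :: 'a assume x: "x \<in> sphere 0 1"
  have "u \<in> orbit_hull x"
    using omega_LUR_big_point_in_orbit_hull[OF assms(1,3)] x by simp
  hence "orbit_hull u \<subseteq> orbit_hull x" by (rule orbit_hull_mono)
  hence "cball 0 1 \<subseteq> orbit_hull x" using assms(3) by (simp add: big_point_orbit_hull)
  moreover have "orbit_hull x \<subseteq> cball 0 1" using orbit_hull_subset_cball[of x] x by simp
  ultimately show "big_point x" using x by (simp add: big_point_orbit_hull)
qed

end
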